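(* Every divergent $T$-orbit of a positive integer and every nontrivial $T$-cycle of positive integers contains an integer congruent to $20\pmod{27}$; i.e. $\{20\bmod 27\}$ is forward sufficient and cycle sufficient.
   Context: $T(x)=x/2$ for $x$ even and $T(x)=(3x+1)/2$ for $x$ odd. A divergent orbit is an unbounded $T$-orbit of a positive integer; a nontrivial cycle is a periodic $T$-orbit of positive integers other than $\{1,2\}$. *)

theory Defs
  imports Main
begin

definition T :: "nat \<Rightarrow> nat" where
  "T x = (if even x then x div 2 else (3 * x + 1) div 2)"

definition T_orbit :: "nat \<Rightarrow> nat set" where
  "T_orbit n = range (\<lambda>k. (T ^^ k) n)"

definition divergent_orbit :: "nat \<Rightarrow> bool" where
  "divergent_orbit n \<longleftrightarrow> n > 0 \<and> \<not> bdd_above (T_orbit n)"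

definition nontrivial_cycle :: "nat set \<Rightarrow> bool" where
  "nontrivial_cycle C \<longleftrightarrow> (\<exists>n>0. (\<exists>p>0. (T ^^ p) n = n) \<and> C = T_orbit n) \<and> C \<noteq> {1, 2}"

end

theory Submission imports Defs begin

(* Attach to every positive integer x the weight
     weight x = x * 2 ^ phi (x mod 27),
   where phi is an explicit table of exponents on the residues mod 27.  Since T x mod 27 is
   determined by x mod 27 and the parity of x, a finite check shows: as long as neither x
   nor T x lies in one of the "trap" residues 13, 20, 26 mod 27, the weight does not
   increase under T, and it strictly decreases at odd x > 1.  Halving loses a factor 2
   that phi may regain, while the step x -> (3x+1)/2 (less than 2x) must be paid for by a
   drop of phi.  The residues 13 and 26 lead to 20 (13 directly, 26 after the 2-adic
   valuation of x + 1 is used up), so an orbit that avoids 20 avoids all traps and has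
   non-increasing weight along it.
   Consequently a divergent orbit must meet 20 mod 27, since otherwise it is bounded by
   the weight of its start; and a cycle avoiding 20 has constant weight, so its odd
   members (which exist, as a cycle cannot consist of halvings alone) are all equal
   to 1, which forces the cycle to be the trivial one {1, 2}. *)

lemma funpow_apply_add: "(f ^^ m) ((f ^^ n) x) = (f ^^ (m + n)) x"
  by (simp add: funpow_add)

lemma T_pos: "x > 0 \<Longrightarrow> T x > 0"
  by (auto simp: T_def)

lemma funpow_T_pos: "n > 0 \<Longrightarrow> (T ^^ k) n > 0"
  by (induction k) (auto simp: T_pos)

lemma funpow_T_all_even:
  assumes "\<forall>i<k. even ((T ^^ i) n)"
  shows "(T ^^ k) n * 2 ^ k = n"
  using assms
proof (induction k)
  case 0
  show ?case by simp
next
  case (Suc k)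
  have even_k: "even ((T ^^ k) n)" using Suc.prems by simp
  then have "(T ^^ Suc k) n * 2 ^ Suc k = (T ^^ k) n * 2 ^ k" by (auto simp: T_def)
  with Suc show ?case by simp
qed

lemma periodic_orbit_has_odd:
  assumes "n > 0" "p > 0" "(T ^^ p) n = n"
  obtains k where "k < p" "odd ((T ^^ k) n)"
proof -
  have "\<exists>k<p. odd ((T ^^ k) n)"
  proof (rule ccontr)
    assume "\<not> (\<exists>k<p. odd ((T ^^ k) n))"
    then have "n * 2 ^ p = n * 1" using funpow_T_all_even[of p n] assms(3) by auto
    then have "(2::nat) ^ p = 1" using assms(1) by (metis mult_left_cancel not_gr0)
    with assms(2) show False by simp
  qed
  with that show ?thesis by blast
qed

lemma funpow_T_1_2: "x \<in> {1, 2} \<Longrightarrow> (T ^^ k) x \<in> {1, 2}"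
  by (induction k) (auto simp: T_def)

lemma T_orbit_1_2:
  assumes "n \<in> {1, 2}"
  shows "T_orbit n = {1, 2}"
proof
  show "T_orbit n \<subseteq> {1, 2}" unfolding T_orbit_def using funpow_T_1_2[OF assms] by blast
  have "(T ^^ 0) n \<in> T_orbit n" "(T ^^ 1) n \<in> T_orbit n"
    unfolding T_orbit_def by (rule rangeI)+
  then have "n \<in> T_orbit n" "T n \<in> T_orbit n" by simp_all
  moreover have "{n, T n} = {1, 2}" using assms by (auto simp: T_def)
  ultimately show "{1, 2} \<subseteq> T_orbit n" by (metis empty_subsetI insert_subset)
qed

lemma periodic_orbit_through_1:
  assumes "(T ^^ p) n = n" "k < p" "(T ^^ k) n = 1"
  shows "T_orbit n = {1, 2}"
proof -
  have "n = (T ^^ (p - k)) ((T ^^ k) n)"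
    using assms(1,2) by (simp add: funpow_apply_add)
  then have "n \<in> {1, 2}" using assms(3) funpow_T_1_2[of 1 "p - k"] by simp
  then show ?thesis by (rule T_orbit_1_2)
qed

section \<open>T modulo 27\<close>

(* 14 is the inverse of 2 modulo 27. *)
lemma half_mod_27:
  assumes "2 * y = (z::nat)"
  shows "y mod 27 = 14 * z mod 27"
proof -
  have "14 * z = y + y * 27" using assms by simp
  then show ?thesis by (simp only: mod_mult_self1)
qed

lemma T_mod_27:
  "T x mod 27 = (if even x then 14 * (x mod 27) else 14 * (3 * (x mod 27) + 1)) mod 27"
proof (cases "even x")
  case True
  then have "T x mod 27 = 14 * x mod 27" by (intro half_mod_27) (simp add: T_def)
  also have "\<dots> = 14 * (x mod 27) mod 27" by (simp only: mod_mult_right_eq)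
  finally show ?thesis using True by simp
next
  case False
  then have "T x mod 27 = 14 * (3 * x + 1) mod 27" by (intro half_mod_27) (simp add: T_def)
  also have "\<dots> = 14 * ((3 * x + 1) mod 27) mod 27" by (simp only: mod_mult_right_eq)
  also have "(3 * x + 1) mod 27 = (3 * (x mod 27) + 1) mod 27"
    by (metis mod_add_left_eq mod_mult_right_eq)
  also have "14 * ((3 * (x mod 27) + 1) mod 27) mod 27 = 14 * (3 * (x mod 27) + 1) mod 27"
    by (simp only: mod_mult_right_eq)
  finally show ?thesis using False by simp
qed

lemma T_mod_27_13: "x mod 27 = 13 \<Longrightarrow> T x mod 27 = 20"
  using T_mod_27[of x] by simp

(* Induction on a bound k for the 2-adic valuation of x + 1: an odd x = 26 mod 27 is
   mapped to 26 mod 27 again with one factor 2 less in x + 1 (as T x + 1 = 3 (x + 1) / 2),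
   and an even x = 26 mod 27 is mapped to 13 mod 27. *)
lemma residue_26_reaches_20_bounded:
  "x mod 27 = 26 \<Longrightarrow> \<not> 2 ^ k dvd (x + 1) \<Longrightarrow> \<exists>j. (T ^^ j) x mod 27 = 20"
proof (induction k arbitrary: x)
  case 0
  then show ?case by simp
next
  case (Suc k)
  show ?case
  proof (cases "even x")
    case True
    then have "T x mod 27 = 13" using T_mod_27[of x] Suc.prems(1) by simp
    then have "(T ^^ 2) x mod 27 = 20" by (simp add: numeral_2_eq_2 T_mod_27_13)
    then show ?thesis by blast
  next
    case False
    have T_26: "T x mod 27 = 26" using T_mod_27[of x] False Suc.prems(1) by simp
    have double_T: "2 * (T x + 1) = 3 * (x + 1)" using False by (simp add: T_def)
    have "\<not> 2 ^ k dvd (T x + 1)"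
    proof
      assume "2 ^ k dvd (T x + 1)"
      then have "2 * 2 ^ k dvd 2 * (T x + 1)" by (rule mult_dvd_mono[OF dvd_refl])
      then have "2 ^ Suc k dvd 3 * (x + 1)" by (simp only: double_T power_Suc)
      moreover have "coprime (2 ^ Suc k :: nat) 3" by simp
      ultimately have "2 ^ Suc k dvd (x + 1)" using coprime_dvd_mult_right_iff by blast
      with Suc.prems(2) show False by simp
    qed
    then obtain j where "(T ^^ j) (T x) mod 27 = 20" using Suc.IH T_26 by blast
    then have "(T ^^ Suc j) x mod 27 = 20" by (simp add: funpow_Suc_right del: funpow.simps)
    then show ?thesis by blast
  qed
qed

lemma residue_26_reaches_20:
  assumes "x mod 27 = 26"
  shows "\<exists>j. (T ^^ j) x mod 27 = 20"
proof -
  have "x + 1 < 2 ^ (x + 1)" by (rule less_exp)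
  then have "\<not> 2 ^ (x + 1) dvd (x + 1)" using dvd_imp_le[of "2 ^ (x + 1)" "x + 1"] by linarith
  with assms show ?thesis by (rule residue_26_reaches_20_bounded)
qed

section \<open>Orbits avoiding 20 mod 27\<close>

definition avoids_20 :: "nat \<Rightarrow> bool" where
  "avoids_20 n \<longleftrightarrow> (\<forall>k. (T ^^ k) n mod 27 \<noteq> 20)"

(* The residues from which every orbit is forced into 20 mod 27. *)
definition trap :: "nat \<Rightarrow> bool" where
  "trap r \<longleftrightarrow> r = 13 \<or> r = 20 \<or> r = 26"

lemma avoids_20_funpow: "avoids_20 n \<Longrightarrow> avoids_20 ((T ^^ k) n)"
  unfolding avoids_20_def by (simp add: funpow_apply_add)

lemma avoids_20_T: "avoids_20 n \<Longrightarrow> avoids_20 (T n)"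
  using avoids_20_funpow[of n 1] by simp

lemma avoids_20_no_trap:
  assumes "avoids_20 n"
  shows "\<not> trap (n mod 27)"
proof
  assume "trap (n mod 27)"
  then consider "n mod 27 = 13" | "n mod 27 = 20" | "n mod 27 = 26"
    unfolding trap_def by blast
  then have "\<exists>j. (T ^^ j) n mod 27 = 20"
  proof cases
    case 1
    then have "(T ^^ 1) n mod 27 = 20" by (simp add: T_mod_27_13)
    then show ?thesis by blast
  next
    case 2
    then have "(T ^^ 0) n mod 27 = 20" by simp
    then show ?thesis by blast
  next
    case 3
    then show ?thesis by (rule residue_26_reaches_20)
  qed
  with assms show False unfolding avoids_20_def by blast
qed

section \<open>The weight function\<close>

(* The exponent table defining the weight; the trap residues 13, 20, 26 carry dummy values. *)
definition phi :: "nat \<Rightarrow> nat" where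
  "phi r = [2, 2, 1, 2, 1, 1, 2, 2, 0, 2, 2, 1, 2, 2, 1, 2, 2, 0, 2, 2, 2, 2, 1, 1, 2, 2, 2] ! r"

definition weight :: "nat \<Rightarrow> nat" where
  "weight x = x * 2 ^ phi (x mod 27)"

lemma phi_table:
  assumes "r < 27" "\<not> trap r"
  shows "(\<not> trap (14 * r mod 27) \<longrightarrow> phi (14 * r mod 27) \<le> phi r + 1) \<and>
    (\<not> trap (14 * (3 * r + 1) mod 27) \<longrightarrow> phi (14 * (3 * r + 1) mod 27) + 1 \<le> phi r)"
proof -
  have "r \<in> {..<27}" using assms(1) by simp
  also have "{..<27::nat} =
      {0, 1, 2, 3, 4, 5, 6, 7, 8, 9, 10, 11, 12, 13, 14, 15, 16, 17, 18, 19, 20, 21, 22, 23, 24, 25, 26}"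
    by (simp add: lessThan_nat_numeral lessThan_Suc insert_commute)
  finally show ?thesis using assms(2) by (auto simp: trap_def phi_def)
qed

lemma phi_step:
  assumes "\<not> trap (x mod 27)" "\<not> trap (T x mod 27)"
  shows "even x \<Longrightarrow> phi (T x mod 27) \<le> phi (x mod 27) + 1"
    and "odd x \<Longrightarrow> phi (T x mod 27) + 1 \<le> phi (x mod 27)"
proof -
  have table: "(\<not> trap (14 * (x mod 27) mod 27) \<longrightarrow> phi (14 * (x mod 27) mod 27) \<le> phi (x mod 27) + 1) \<and>
    (\<not> trap (14 * (3 * (x mod 27) + 1) mod 27) \<longrightarrow>
      phi (14 * (3 * (x mod 27) + 1) mod 27) + 1 \<le> phi (x mod 27))"
    using phi_table[OF _ assms(1)] by simp
  show "even x \<Longrightarrow> phi (T x mod 27) \<le> phi (x mod 27) + 1"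
    using table assms(2) T_mod_27[of x] by simp
  show "odd x \<Longrightarrow> phi (T x mod 27) + 1 \<le> phi (x mod 27)"
    using table assms(2) T_mod_27[of x] by simp
qed

lemma le_weight: "x \<le> weight x"
  by (simp add: weight_def)

lemma weight_T_le:
  assumes "x > 0" "\<not> trap (x mod 27)" "\<not> trap (T x mod 27)"
  shows "weight (T x) \<le> weight x"
proof (cases "even x")
  case True
  have "weight (T x) = (x div 2) * 2 ^ phi (T x mod 27)"
    using True by (simp add: weight_def T_def)
  also have "\<dots> \<le> (x div 2) * 2 ^ (phi (x mod 27) + 1)"
    using phi_step(1)[OF assms(2,3) True] by (intro mult_le_mono2 power_increasing) auto
  also have "\<dots> = weight x" using True by (auto simp: weight_def)
  finally show ?thesis .
next
  case False
  have "T x \<le> 2 * x" using False assms(1) by (simp add: T_def)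
  then have "weight (T x) \<le> x * 2 ^ (phi (T x mod 27) + 1)" by (simp add: weight_def)
  also have "\<dots> \<le> weight x"
    using phi_step(2)[OF assms(2,3) False] unfolding weight_def
    by (intro mult_le_mono2 power_increasing) auto
  finally show ?thesis .
qed

lemma weight_T_less:
  assumes "odd x" "x > 1" "\<not> trap (x mod 27)" "\<not> trap (T x mod 27)"
  shows "weight (T x) < weight x"
proof -
  have "2 * T x = 3 * x + 1" using assms(1) by (simp add: T_def)
  then have "T x < 2 * x" using assms(2) by linarith
  then have "weight (T x) < x * 2 ^ (phi (T x mod 27) + 1)" by (simp add: weight_def)
  also have "\<dots> \<le> weight x"
    using phi_step(2)[OF assms(3,4,1)] unfolding weight_def
    by (intro mult_le_mono2 power_increasing) auto
  finally show ?thesis .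
qed

lemma weight_funpow_le:
  assumes "n > 0" "avoids_20 n"
  shows "weight ((T ^^ k) n) \<le> weight n"
  using assms
proof (induction k arbitrary: n)
  case 0
  then show ?case by simp
next
  case (Suc k)
  have "weight ((T ^^ Suc k) n) = weight ((T ^^ k) (T n))"
    by (simp add: funpow_Suc_right del: funpow.simps)
  also have "\<dots> \<le> weight (T n)"
    using Suc.IH[OF T_pos[OF Suc.prems(1)] avoids_20_T[OF Suc.prems(2)]] .
  also have "\<dots> \<le> weight n"
    using weight_T_le[OF Suc.prems(1) avoids_20_no_trap[OF Suc.prems(2)]
        avoids_20_no_trap[OF avoids_20_T[OF Suc.prems(2)]]] .
  finally show ?case .
qed

lemma divergent_orbit_meets_20:
  assumes "divergent_orbit n"
  shows "\<exists>m\<in>T_orbit n. m mod 27 = 20"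
proof (rule ccontr)
  assume "\<not> (\<exists>m\<in>T_orbit n. m mod 27 = 20)"
  then have "avoids_20 n" unfolding avoids_20_def T_orbit_def by auto
  moreover have "n > 0" using assms unfolding divergent_orbit_def by simp
  ultimately have "\<forall>k. (T ^^ k) n \<le> weight n"
    using le_weight weight_funpow_le order_trans by meson
  then have "bdd_above (T_orbit n)" unfolding T_orbit_def bdd_above_def by auto
  with assms show False unfolding divergent_orbit_def by simp
qed

(* On a cycle avoiding 20 mod 27 the weight is constant, so every odd member is 1. *)
lemma periodic_orbit_avoiding_20_is_trivial:
  assumes "n > 0" "p > 0" "(T ^^ p) n = n" "avoids_20 n"
  shows "T_orbit n = {1, 2}"
proof -
  obtain k where "k < p" and odd_k: "odd ((T ^^ k) n)"
    using periodic_orbit_has_odd[OF assms(1-3)] by blast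
  define x where "x = (T ^^ k) n"
  have "x = 1"
  proof (rule ccontr)
    assume "x \<noteq> 1"
    then have "x > 1" using funpow_T_pos[OF assms(1), of k] x_def by linarith
    have x_pos: "x > 0" using \<open>x > 1\<close> by simp
    have avoids_x: "avoids_20 x" using avoids_20_funpow[OF assms(4)] x_def by simp
    have avoids_Tx: "avoids_20 (T x)" using avoids_20_T[OF avoids_x] .
    have "(T ^^ (p - Suc k)) ((T ^^ Suc k) n) = n"
      using assms(3) \<open>k < p\<close> by (simp add: funpow_apply_add del: funpow.simps)
    then have "n = (T ^^ (p - Suc k)) (T x)" unfolding x_def by simp
    then have "weight n \<le> weight (T x)"
      using weight_funpow_le[OF T_pos[OF x_pos] avoids_Tx] by simp
    also have "\<dots> < weight x"
      using weight_T_less[OF _ \<open>x > 1\<close> avoids_20_no_trap[OF avoids_x] avoids_20_no_trap[OF avoids_Tx]]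
        odd_k x_def by simp
    also have "\<dots> \<le> weight n" using weight_funpow_le[OF assms(1,4)] x_def by simp
    finally show False by simp
  qed
  then show ?thesis using periodic_orbit_through_1[OF assms(3) \<open>k < p\<close>] x_def by simp
qed

lemma nontrivial_cycle_meets_20:
  assumes "nontrivial_cycle C"
  shows "\<exists>m\<in>C. m mod 27 = 20"
proof (rule ccontr)
  assume no_20: "\<not> (\<exists>m\<in>C. m mod 27 = 20)"
  obtain n p where "n > 0" "p > 0" "(T ^^ p) n = n" and C: "C = T_orbit n" "C \<noteq> {1, 2}"
    using assms unfolding nontrivial_cycle_def by blast
  moreover have "avoids_20 n" using no_20 unfolding C avoids_20_def T_orbit_def by auto
  ultimately show False using periodic_orbit_avoiding_20_is_trivial by blast
qed

theorem mainTheorem15: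
  shows "(\<forall>n. divergent_orbit n \<longrightarrow> (\<exists>m\<in>T_orbit n. m mod 27 = 20))
       \<and> (\<forall>C. nontrivial_cycle C \<longrightarrow> (\<exists>m\<in>C. m mod 27 = 20))"
  using divergent_orbit_meets_20 nontrivial_cycle_meets_20 by blast

end
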